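(* There is an absolute constant $c>0$ such that the following holds. Let $A$ and $B$ be finite nonempty sets of real numbers, and suppose $A$ has distinct consecutive differences. Then \[ |A+B| \ge c\,|A|\,|B|^{1/2}. \] In particular, if $|A|=|B|$ then $|A+B|\ge c|A|^{3/2}$.
   Context: For finite $A,B\subset\mathbb{R}$, $A+B=\{a+b: a\in A, b\in B\}$. Writing $A=\{a_1<a_2<\dots<a_k\}$, the set $A$ has distinct consecutive differences if for $1\le i,j\le k-1$, $a_{i+1}-a_i=a_{j+1}-a_j$ implies $i=j$. *)

theory Defs
  imports Complex_Main
begin

definition sumset :: "real set \<Rightarrow> real set \<Rightarrow> real set" where
  "sumset A B = {a + b | a b. a \<in> A \<and> b \<in> B}"

definition distinct_consec_diffs :: "real set \<Rightarrow> bool" where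
  "distinct_consec_diffs A \<longleftrightarrow>
     (let a = sorted_list_of_set A in
      \<forall>i j. i + 1 < length a \<and> j + 1 < length a \<and>
            a ! (i + 1) - a ! i = a ! (j + 1) - a ! j \<longrightarrow> i = j)"

end

theory Submission
  imports Defs
begin

text \<open>
Let \<open>a\<^sub>0 < \<dots> < a\<^sub>K\<close> be the elements of \<open>A\<close>, \<open>S = A + B\<close> and \<open>N = |S|\<close>. For every gap \<open>i\<close> and
every \<open>b \<in> B\<close> count the points of \<open>S\<close> in \<open>(a\<^sub>i + b, a\<^sub>i\<^sub>+\<^sub>1 + b]\<close>. For fixed \<open>b\<close> these intervals are
disjoint, so the counts sum to at most \<open>N\<close>, and at most \<open>|B| N / (M + 1)\<close> pairs have count \<open>> M\<close>.
A pair with count \<open>\<le> M\<close> is determined by its left endpoint in \<open>S\<close> and its count: these fix the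
right endpoint (it lies in \<open>S\<close>), hence the gap length, hence \<open>i\<close> by distinctness of the gaps,
and then \<open>b\<close>. So there are at most \<open>N M\<close> such pairs, and \<open>M \<approx> 2N/K\<close> gives \<open>|B| K\<^sup>2 \<le> 4 N\<^sup>2\<close>.
\<close>

lemma mem_sumsetI: "x \<in> A \<Longrightarrow> y \<in> B \<Longrightarrow> x + y \<in> sumset A B"
  unfolding sumset_def by blast

lemma finite_sumset:
  assumes "finite A" "finite B"
  shows "finite (sumset A B)"
proof -
  have "sumset A B = (\<lambda>(x, y). x + y) ` (A \<times> B)"
    unfolding sumset_def by auto
  with assms show ?thesis
    by simp
qed

lemma card_le_card_sumset_right:
  assumes "finite A" "finite B" "x \<in> A"
  shows "card B \<le> card (sumset A B)"
proof -
  have "card B = card ((+) x ` B)"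
    by (simp add: card_image)
  also have "\<dots> \<le> card (sumset A B)"
    using assms by (intro card_mono finite_sumset) (auto intro: mem_sumsetI)
  finally show ?thesis .
qed

lemma card_Int_Ioc_less:
  fixes S :: "real set"
  assumes "finite S" "h \<in> S" "lo < h" "h' < h"
  shows "card (S \<inter> {lo<..h'}) < card (S \<inter> {lo<..h})"
proof (rule psubset_card_mono)
  show "finite (S \<inter> {lo<..h})"
    using assms(1) by simp
  have "S \<inter> {lo<..h'} \<subseteq> S \<inter> {lo<..h}" "h \<in> S \<inter> {lo<..h}" "h \<notin> S \<inter> {lo<..h'}"
    using assms(2-4) by auto
  then show "S \<inter> {lo<..h'} \<subset> S \<inter> {lo<..h}"
    by blast
qed

lemma card_Int_Ioc_inject:
  fixes S :: "real set"
  assumes "finite S" "h \<in> S" "h' \<in> S" "lo < h" "lo < h'"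
    and "card (S \<inter> {lo<..h}) = card (S \<inter> {lo<..h'})"
  shows "h = h'"
  using card_Int_Ioc_less[OF assms(1,2,4), of h'] card_Int_Ioc_less[OF assms(1,3,5), of h] assms(6)
  by (cases h h' rule: linorder_cases) auto

lemma sum_card_Int_Ioc_le_card:
  fixes S :: "real set" and c :: "nat \<Rightarrow> real"
  assumes "finite S" "mono_on {..K} c"
  shows "(\<Sum>i<K. card (S \<inter> {c i<..c (Suc i)})) \<le> card S"
proof -
  have "(\<Sum>i<K. card (S \<inter> {c i<..c (Suc i)})) = card (\<Union>i<K. S \<inter> {c i<..c (Suc i)})"
  proof (rule card_UN_disjoint[symmetric])
    show "\<forall>i\<in>{..<K}. \<forall>j\<in>{..<K}. i \<noteq> j \<longrightarrow>
        (S \<inter> {c i<..c (Suc i)}) \<inter> (S \<inter> {c j<..c (Suc j)}) = {}"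
    proof (intro ballI impI)
      fix i j assume "i \<in> {..<K}" "j \<in> {..<K}" "i \<noteq> j"
      then consider "Suc i \<le> j" "j \<le> K" | "Suc j \<le> i" "i \<le> K"
        by fastforce
      then show "(S \<inter> {c i<..c (Suc i)}) \<inter> (S \<inter> {c j<..c (Suc j)}) = {}"
      proof cases
        case 1
        then have "c (Suc i) \<le> c j"
          by (intro mono_onD[OF assms(2)]) auto
        then show ?thesis
          by auto
      next
        case 2
        then have "c (Suc j) \<le> c i"
          by (intro mono_onD[OF assms(2)]) auto
        then show ?thesis
          by auto
      qed
    qed
  qed (use assms(1) in auto)
  also have "\<dots> \<le> card S"
    using assms(1) by (intro card_mono) auto
  finally show ?thesis .
qed

locale distinct_gaps_setting =
  fixes a :: "nat \<Rightarrow> real" and K :: nat and B S :: "real set"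
  assumes strict_mono: "strict_mono_on {..K} a"
    and distinct_gaps: "inj_on (\<lambda>i. a (Suc i) - a i) {..<K}"
    and finite_B: "finite B" and finite_S: "finite S"
    and sums_in_S: "\<And>i b. i \<le> K \<Longrightarrow> b \<in> B \<Longrightarrow> a i + b \<in> S"
begin

definition count :: "nat \<Rightarrow> real \<Rightarrow> nat" where
  "count i b = card (S \<inter> {a i + b<..a (Suc i) + b})"

lemma gap_pos: "i < K \<Longrightarrow> a i < a (Suc i)"
  using strict_mono by (auto intro: strict_mono_onD)

lemma count_pos:
  assumes "i < K" "b \<in> B"
  shows "0 < count i b"
proof -
  have "a (Suc i) + b \<in> S \<inter> {a i + b<..a (Suc i) + b}"
    using assms gap_pos sums_in_S by simp
  then show ?thesis
    unfolding count_def using finite_S by (auto simp: card_gt_0_iff)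
qed

lemma sum_count_le: "(\<Sum>i<K. count i b) \<le> card S"
proof -
  have "mono_on {..K} (\<lambda>i. a i + b)"
    using strict_mono_on_imp_mono_on[OF strict_mono] by (auto simp: mono_on_def)
  then show ?thesis
    unfolding count_def using sum_card_Int_Ioc_le_card[OF finite_S] by blast
qed

lemma card_small_count_le:
  "card {(i, b) \<in> {..<K} \<times> B. count i b \<le> M} \<le> card S * M"
proof -
  define G where "G = {(i, b) \<in> {..<K} \<times> B. count i b \<le> M}"
  define g where "g = (\<lambda>(i, b). (a i + b, count i b))"
  have "inj_on g G"
  proof (rule inj_onI, clarify)
    fix i b j b'
    assume ib: "(i, b) \<in> G" and jb: "(j, b') \<in> G" and eq: "g (i, b) = g (j, b')"
    then have i: "i < K" "b \<in> B" and j: "j < K" "b' \<in> B"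
      unfolding G_def by auto
    from eq have lo: "a i + b = a j + b'" and cnt: "count i b = count j b'"
      unfolding g_def by auto
    have "a (Suc i) + b = a (Suc j) + b'"
    proof (rule card_Int_Ioc_inject[OF finite_S])
      show "card (S \<inter> {a i + b<..a (Suc i) + b}) = card (S \<inter> {a i + b<..a (Suc j) + b'})"
        using cnt lo unfolding count_def by simp
    qed (use i j lo gap_pos[of i] gap_pos[of j] sums_in_S in auto)
    with lo have "a (Suc i) - a i = a (Suc j) - a j"
      by simp
    with i j have "i = j"
      using inj_onD[OF distinct_gaps] by blast
    with lo show "i = j \<and> b = b'"
      by simp
  qed
  moreover have "g ` G \<subseteq> S \<times> {1..M}"
    using sums_in_S count_pos by (force simp: G_def g_def Suc_le_eq)
  ultimately have "card G \<le> card (S \<times> {1..M})"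
    using finite_S by (metis card_image card_mono finite_SigmaI finite_atLeastAtMost)
  then show ?thesis
    unfolding G_def by (simp add: card_cartesian_product)
qed

lemma card_large_count_le:
  "card {(i, b) \<in> {..<K} \<times> B. M < count i b} * (M + 1) \<le> card B * card S"
proof -
  define L where "L = {(i, b) \<in> {..<K} \<times> B. M < count i b}"
  have "card L * (M + 1) = (\<Sum>(i, b)\<in>L. M + 1)"
    by simp
  also have "\<dots> \<le> (\<Sum>(i, b)\<in>L. count i b)"
    by (rule sum_mono) (auto simp: L_def)
  also have "\<dots> \<le> (\<Sum>(i, b)\<in>{..<K} \<times> B. count i b)"
    using finite_B by (intro sum_mono2) (auto simp: L_def)
  also have "\<dots> = (\<Sum>b\<in>B. \<Sum>i<K. count i b)"
    by (simp add: sum.cartesian_product' sum.swap[of _ B])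
  also have "\<dots> \<le> card B * card S"
    using sum_bounded_above[of B "\<lambda>b. \<Sum>i<K. count i b" "card S"] sum_count_le by simp
  finally show ?thesis
    unfolding L_def .
qed

lemma card_pairs_eq: "card {(i, b) \<in> {..<K} \<times> B. count i b \<le> M}
    + card {(i, b) \<in> {..<K} \<times> B. M < count i b} = K * card B"
proof -
  let ?P = "{..<K} \<times> B"
  have "finite ?P"
    using finite_B by simp
  then have "card {(i, b) \<in> ?P. count i b \<le> M} + card {(i, b) \<in> ?P. M < count i b}
      = card ({(i, b) \<in> ?P. count i b \<le> M} \<union> {(i, b) \<in> ?P. M < count i b})"
    by (intro card_Un_disjoint[symmetric]) (auto elim: rev_finite_subset)
  also have "{(i, b) \<in> ?P. count i b \<le> M} \<union> {(i, b) \<in> ?P. M < count i b} = ?P"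
    by auto
  finally show ?thesis
    by (simp add: card_cartesian_product)
qed

end

text \<open>The threshold \<open>M = \<lfloor>2N/K\<rfloor>\<close> makes \<open>L \<le> K Bc / 2\<close>, so \<open>K Bc \<le> 2 N M \<le> 4 N\<^sup>2 / K\<close>.\<close>

lemma threshold_arith:
  fixes N M K Bc G L :: nat
  assumes "G \<le> N * M" "L * (M + 1) \<le> Bc * N" "G + L = K * Bc"
    and "M * K \<le> 2 * N" "2 * N < (M + 1) * K"
  shows "Bc * K\<^sup>2 \<le> 4 * N\<^sup>2"
proof -
  have "(2 * L) * ((M + 1) * K) \<le> 2 * Bc * N * K"
    using mult_le_mono1[OF assms(2), of "2 * K"] by (simp add: algebra_simps)
  also have "\<dots> \<le> (Bc * K) * ((M + 1) * K)"
    using mult_le_mono2[OF less_imp_le[OF assms(5)], of "Bc * K"] by (simp add: algebra_simps)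
  finally have "(2 * L) * ((M + 1) * K) \<le> (Bc * K) * ((M + 1) * K)" .
  moreover have "0 < (M + 1) * K"
    using assms(5) by linarith
  ultimately have "2 * L \<le> Bc * K"
    by (meson mult_le_cancel2)
  with assms(1,3) have "2 * (K * Bc) \<le> 2 * (N * M) + K * Bc"
    by (simp add: mult.commute)
  then have "K * Bc \<le> 2 * N * M"
    by (simp add: mult.commute)
  then have "Bc * K\<^sup>2 \<le> 2 * N * (M * K)"
    using mult_le_mono1[of "K * Bc" _ K] by (simp add: power2_eq_square algebra_simps)
  also have "\<dots> \<le> 2 * N * (2 * N)"
    using assms(4) by (rule mult_le_mono2)
  also have "\<dots> = 4 * N\<^sup>2"
    by (simp add: power2_eq_square)
  finally show ?thesis .
qed

lemma (in distinct_gaps_setting) card_mult_sq_le: "card B * K\<^sup>2 \<le> 4 * card S ^ 2"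
proof (cases "K = 0")
  case False
  define M where "M = 2 * card S div K"
  have "M * K \<le> 2 * card S" "2 * card S < (M + 1) * K"
    using False unfolding M_def
    by (simp_all add: dividend_less_div_times)
  then show ?thesis
    using threshold_arith[OF card_small_count_le card_large_count_le card_pairs_eq] by blast
qed simp

lemma distinct_consec_diffs_sorted_nth:
  fixes A :: "real set"
  assumes "finite A" "A \<noteq> {}" "distinct_consec_diffs A"
  defines "a \<equiv> (!) (sorted_list_of_set A)"
  shows "strict_mono_on {..card A - 1} a" "inj_on (\<lambda>i. a (Suc i) - a i) {..<card A - 1}"
    "\<And>i. i \<le> card A - 1 \<Longrightarrow> a i \<in> A"
proof -
  have len: "length (sorted_list_of_set A) = card A"
    by simp
  have index: "i \<le> card A - 1 \<longleftrightarrow> i < card A" for i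
    using assms(1,2) card_gt_0_iff[of A] by linarith
  show "strict_mono_on {..card A - 1} a"
  proof (rule strict_mono_onI)
    fix i j assume "i \<in> {..card A - 1}" "j \<in> {..card A - 1}" "i < j"
    moreover have "j < length (sorted_list_of_set A)"
      using \<open>j \<in> {..card A - 1}\<close> index len by simp
    ultimately show "a i < a j"
      unfolding a_def using sorted_wrt_nth_less[OF strict_sorted_list_of_set] by blast
  qed
  show "inj_on (\<lambda>i. a (Suc i) - a i) {..<card A - 1}"
  proof (rule inj_onI)
    fix i j assume "i \<in> {..<card A - 1}" "j \<in> {..<card A - 1}"
      and gaps: "a (Suc i) - a i = a (Suc j) - a j"
    then have "i + 1 < length (sorted_list_of_set A)" "j + 1 < length (sorted_list_of_set A)"
      using len by auto
    with gaps assms(3) show "i = j"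
      unfolding distinct_consec_diffs_def Let_def a_def by simp
  qed
  show "a i \<in> A" if "i \<le> card A - 1" for i
  proof -
    have "a i \<in> set (sorted_list_of_set A)"
      unfolding a_def using that index len by simp
    with assms(1) show ?thesis
      by simp
  qed
qed

lemma card_mult_sq_le_card_sumset:
  fixes A B :: "real set"
  assumes "finite A" "finite B" "A \<noteq> {}" "B \<noteq> {}" "distinct_consec_diffs A"
  shows "card B * card A ^ 2 \<le> 16 * card (sumset A B) ^ 2"
proof -
  define N where "N = card (sumset A B)"
  have "card B \<le> N"
    using assms card_le_card_sumset_right unfolding N_def by blast
  have "card A \<ge> 1"
    using assms by (simp add: Suc_le_eq card_gt_0_iff)
  show ?thesis
  proof (cases "card A = 1")
    case True
    have "N \<le> 16 * N\<^sup>2"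
      using le_square[of N] by (simp add: power2_eq_square)
    with True \<open>card B \<le> N\<close> show ?thesis
      unfolding N_def by simp
  next
    case False
    define K where "K = card A - 1"
    interpret distinct_gaps_setting "(!) (sorted_list_of_set A)" K B "sumset A B"
    proof
      show "finite (sumset A B)"
        using assms(1,2) by (rule finite_sumset)
      show "sorted_list_of_set A ! i + b \<in> sumset A B" if "i \<le> K" "b \<in> B" for i b
        using that distinct_consec_diffs_sorted_nth(3)[OF assms(1,3,5)]
        unfolding K_def by (blast intro: mem_sumsetI)
    qed (use assms distinct_consec_diffs_sorted_nth[OF assms(1,3,5)] in \<open>simp_all add: K_def\<close>)
    have "card A \<le> 2 * K"
      using False \<open>card A \<ge> 1\<close> unfolding K_def by simp
    then have "card A ^ 2 \<le> 4 * K\<^sup>2"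
      using power_mono[of "card A" "2 * K" 2] by (simp add: power_mult_distrib)
    then have "card B * card A ^ 2 \<le> 4 * (card B * K\<^sup>2)"
      by simp
    also have "\<dots> \<le> 16 * N ^ 2"
      using card_mult_sq_le unfolding N_def by simp
    finally show ?thesis
      unfolding N_def .
  qed
qed

theorem theorem1:
  shows "\<exists>c::real. c > 0 \<and>
    (\<forall>A B :: real set. finite A \<and> finite B \<and> A \<noteq> {} \<and> B \<noteq> {} \<and>
        distinct_consec_diffs A \<longrightarrow>
        real (card (sumset A B)) \<ge> c * real (card A) * sqrt (real (card B)))"
proof (intro exI[of _ "1/4"] conjI allI impI)
  fix A B :: "real set"
  assume "finite A \<and> finite B \<and> A \<noteq> {} \<and> B \<noteq> {} \<and> distinct_consec_diffs A"
  then have "card B * card A ^ 2 \<le> 16 * card (sumset A B) ^ 2"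
    using card_mult_sq_le_card_sumset by blast
  then have "real (card B) * real (card A) ^ 2 \<le> 16 * real (card (sumset A B)) ^ 2"
    by (metis of_nat_le_iff of_nat_mult of_nat_power of_nat_numeral)
  moreover have "(1/4 * real (card A) * sqrt (real (card B)))\<^sup>2 = real (card B) * real (card A) ^ 2 / 16"
    by (simp add: power_mult_distrib power_divide)
  ultimately have "(1/4 * real (card A) * sqrt (real (card B)))\<^sup>2 \<le> real (card (sumset A B)) ^ 2"
    by linarith
  then show "1/4 * real (card A) * sqrt (real (card B)) \<le> real (card (sumset A B))"
    by (rule power2_le_imp_le) simp
qed simp

end
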